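(* Let $\mathcal{A}$ be a complex unital Banach algebra, let $p,q\in\mathcal{A}$ be idempotents, let $m\in\mathbb{N}$, and let $\gamma_1,\lambda_1,\dots,\lambda_m\in\mathbb{C}$ with $\lambda_1\gamma_1\neq0$. Then $$\lambda_1p+\gamma_1q-\lambda_1pq+\lambda_2\big(pqp-(pq)^2\big)+\cdots+\lambda_m\big((pq)^{m-1}p-(pq)^m\big)$$ is Drazin invertible (respectively, g-Drazin invertible) if and only if $$\lambda_1-\lambda_1pq+\lambda_2\big(pqp-(pq)^2\big)+\cdots+\lambda_m\big((pq)^{m-1}p-(pq)^m\big)$$ is Drazin invertible (respectively, g-Drazin invertible).
   Context: $\mathcal{A}$ is a complex unital Banach algebra with unit $1$; an idempotent is an element $e$ with $e^2=e$. An element $a$ is Drazin invertible if there exists $b\in\mathcal{A}$ with $ab=ba$, $bab=b$, and $(a(1-ab))^n=0$ for some $n\in\mathbb{N}$; g-Drazin invertible if there exists $b$ with $ab=ba$, $bab=b$, and $a(1-ab)$ quasinilpotent (spectral radius $0$). The terms $\lambda_k\big((pq)^{k-1}p-(pq)^k\big)$ for $k=2,\dots,m$ appear in the sums (for $m=1$ only the $\lambda_1$ terms appear). *)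

theory Defs
  imports "HOL-Analysis.Analysis"
begin

class complex_banach_algebra_1 = real_normed_algebra_1 + banach +
  fixes cscale :: "complex \<Rightarrow> 'a \<Rightarrow> 'a"
  assumes cscale_add_right: "cscale c (x + y) = cscale c x + cscale c y"
    and cscale_add_left: "cscale (c + d) x = cscale c x + cscale d x"
    and cscale_cscale: "cscale c (cscale d x) = cscale (c * d) x"
    and cscale_one: "cscale 1 x = x"
    and cscale_of_real: "cscale (of_real r) x = scaleR r x"
    and norm_cscale: "norm (cscale c x) = cmod c * norm x"
    and cscale_left_commute: "cscale c x * y = cscale c (x * y)"
    and cscale_right_commute: "x * cscale c y = cscale c (x * y)"

definition invertible_elem :: "'a::ring_1 \<Rightarrow> bool" where
  "invertible_elem x \<longleftrightarrow> (\<exists>y. x * y = 1 \<and> y * x = 1)"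

definition alg_spectrum :: "'a::complex_banach_algebra_1 \<Rightarrow> complex set" where
  "alg_spectrum a = {\<mu>. \<not> invertible_elem (cscale \<mu> 1 - a)}"

definition alg_spectral_radius :: "'a::complex_banach_algebra_1 \<Rightarrow> real" where
  "alg_spectral_radius a = Sup (cmod ` alg_spectrum a)"

definition quasinilpotent :: "'a::complex_banach_algebra_1 \<Rightarrow> bool" where
  "quasinilpotent a \<longleftrightarrow> alg_spectral_radius a = 0"

definition drazin_invertible :: "'a::ring_1 \<Rightarrow> bool" where
  "drazin_invertible a \<longleftrightarrow>
     (\<exists>b. a * b = b * a \<and> b * a * b = b \<and> (\<exists>n::nat. (a * (1 - a * b)) ^ n = 0))"

definition g_drazin_invertible :: "'a::complex_banach_algebra_1 \<Rightarrow> bool" where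
  "g_drazin_invertible a \<longleftrightarrow>
     (\<exists>b. a * b = b * a \<and> b * a * b = b \<and> quasinilpotent (a * (1 - a * b)))"

end

theory Submission
  imports Defs
begin

text \<open>
  Put \<open>W = \<lambda>\<^sub>1(p - pq) + S\<close>. Then \<open>pW = W\<close>, \<open>Wq = 0\<close>, and the two elements are
  \<open>\<gamma>\<^sub>1q + W\<close> and \<open>\<lambda>\<^sub>1(1 - p) + W\<close>. With \<open>a = 1 - W/\<gamma>\<^sub>1\<close> one has
  \<open>\<gamma>\<^sub>1q + W = \<gamma>\<^sub>1(1 - a(1 - q))\<close>; Jacobson's lemma passes to
  \<open>\<gamma>\<^sub>1(1 - (1 - q)a) = \<gamma>\<^sub>1q + (1 - q)W\<close>, where the idempotent \<open>q\<close> is orthogonal to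
  \<open>(1 - q)W\<close> and can be dropped. Cline's formula turns \<open>(1 - q)W = (1 - q)pW\<close> into
  \<open>W(1 - q)p = Wp\<close>, and the same steps with \<open>p\<close> in place of \<open>q\<close>, read backwards,
  lead to \<open>\<lambda>\<^sub>1(1 - p) + W\<close>.

  Scaling, Cline's formula, Jacobson's lemma and the removal of an orthogonal idempotent hold for
  Drazin-type invertibility relative to any class \<open>N\<close> of residuals with spectrum in \<open>{0}\<close>
  that is closed under cyclic swaps and nonzero scalars. Nilpotents give Drazin invertibility,
  elements with spectrum in \<open>{0}\<close> give g-Drazin invertibility.
\<close>

lemma cscale_one_mult: "cscale c 1 * x = cscale c x"
  by (simp add: cscale_left_commute)

lemma cscale_zero_left [simp]: "cscale 0 x = 0"
  using cscale_of_real[of 0 x] by simp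

lemma cscale_zero_right [simp]: "cscale c (0::'a::complex_banach_algebra_1) = 0"
  by (metis cscale_one_mult mult_zero_right)

lemma cscale_diff_right: "cscale c (x - y) = cscale c x - cscale c (y::'a::complex_banach_algebra_1)"
  by (metis cscale_one_mult right_diff_distrib)

lemma cscale_inverse_cancel [simp]:
  "c \<noteq> 0 \<Longrightarrow> cscale (inverse c) (cscale c x) = x"
  "c \<noteq> 0 \<Longrightarrow> cscale c (cscale (inverse c) x) = x"
  by (simp_all add: cscale_cscale cscale_one)

lemmas cscale_simps = cscale_left_commute cscale_right_commute cscale_cscale cscale_one
  cscale_add_right cscale_diff_right

lemma invertible_elem_cscale:
  assumes "c \<noteq> 0" "invertible_elem x"
  shows "invertible_elem (cscale c x)"
proof -
  obtain y where "x * y = 1" "y * x = 1" using assms(2) unfolding invertible_elem_def by blast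
  then have "cscale c x * cscale (inverse c) y = 1" "cscale (inverse c) y * cscale c x = 1"
    using assms(1) by (simp_all add: cscale_simps)
  then show ?thesis unfolding invertible_elem_def by blast
qed

lemma invertible_elem_cscale_iff:
  "c \<noteq> 0 \<Longrightarrow> invertible_elem (cscale c x) \<longleftrightarrow> invertible_elem x"
  by (metis cscale_inverse_cancel(1) inverse_nonzero_iff_nonzero invertible_elem_cscale)

lemma invertible_elem_mult_eq_0:
  assumes "invertible_elem (k::'a::ring_1)"
  shows "k * x = 0 \<Longrightarrow> x = 0" and "x * k = 0 \<Longrightarrow> x = 0"
  using assms unfolding invertible_elem_def
  by (metis mult.assoc mult_1_left mult_1_right mult_zero_left mult_zero_right)+

lemma inverse_commutes:
  "x * y = 1 \<Longrightarrow> y * x = 1 \<Longrightarrow> c * x = x * c \<Longrightarrow> c * y = y * (c::'a::ring_1)"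
  by (metis mult.assoc mult_1_left mult_1_right)

lemma invertible_elem_one_minus_swap:
  assumes "invertible_elem (1 - v * (u::'a::ring_1))"
  shows "invertible_elem (1 - u * v)"
proof -
  obtain s where s: "(1 - v * u) * s = 1" "s * (1 - v * u) = 1"
    using assms unfolding invertible_elem_def by blast
  have "(1 - u * v) * (1 + u * s * v) = 1 + u * ((1 - v * u) * s) * v - u * v"
    by (simp add: algebra_simps)
  moreover have "(1 + u * s * v) * (1 - u * v) = 1 + u * (s * (1 - v * u)) * v - u * v"
    by (simp add: algebra_simps)
  ultimately show ?thesis using s unfolding invertible_elem_def by auto
qed

lemma invertible_elem_one_minus_nilpotent:
  assumes "w ^ n = (0::'a::ring_1)"
  shows "invertible_elem (1 - w)"
proof -
  have "(1 - w) * (\<Sum>i<n. w ^ i) = (\<Sum>i<n. w ^ i - w ^ Suc i)"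
    "(\<Sum>i<n. w ^ i) * (1 - w) = (\<Sum>i<n. w ^ i - w ^ Suc i)"
    by (simp_all add: sum_distrib_left sum_distrib_right left_diff_distrib right_diff_distrib
        power_commutes sum_subtractf)
  then have "(1 - w) * (\<Sum>i<n. w ^ i) = 1" "(\<Sum>i<n. w ^ i) * (1 - w) = 1"
    using assms by (simp_all only: sum_lessThan_telescope') simp_all
  then show ?thesis unfolding invertible_elem_def by blast
qed

lemma cscale_power: "cscale c w ^ n = cscale (c ^ n) (w ^ n :: 'a::complex_banach_algebra_1)"
  by (induction n) (simp_all add: cscale_simps mult.commute)

lemma cscale_one_minus:
  "\<mu> \<noteq> 0 \<Longrightarrow> cscale \<mu> 1 - w = cscale \<mu> (1 - cscale (inverse \<mu>) (w::'a::complex_banach_algebra_1))"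
  by (simp add: cscale_diff_right)

lemma alg_spectrum_subset_zero_iff:
  "alg_spectrum w \<subseteq> {0} \<longleftrightarrow> (\<forall>\<mu>. \<mu> \<noteq> 0 \<longrightarrow> invertible_elem (1 - cscale \<mu> w))"
proof -
  have resolvent: "\<mu> \<notin> alg_spectrum w \<longleftrightarrow> invertible_elem (1 - cscale (inverse \<mu>) w)"
    if "\<mu> \<noteq> 0" for \<mu>
    using that by (simp add: alg_spectrum_def cscale_one_minus invertible_elem_cscale_iff)
  show ?thesis
  proof (intro iffI allI impI subsetI)
    fix \<mu> :: complex assume "alg_spectrum w \<subseteq> {0}" "\<mu> \<noteq> 0"
    then show "invertible_elem (1 - cscale \<mu> w)" using resolvent[of "inverse \<mu>"] by auto
  next
    fix \<mu> assume "\<forall>\<mu>. \<mu> \<noteq> 0 \<longrightarrow> invertible_elem (1 - cscale \<mu> w)" "\<mu> \<in> alg_spectrum w"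
    then show "\<mu> \<in> {0}" using resolvent[of \<mu>] by auto
  qed
qed

lemma alg_spectrum_subset_zero_swap:
  assumes "alg_spectrum (v * u) \<subseteq> {0}"
  shows "alg_spectrum (u * (v::'a::complex_banach_algebra_1)) \<subseteq> {0}"
  unfolding alg_spectrum_subset_zero_iff
proof (intro allI impI)
  fix \<mu> :: complex assume "\<mu> \<noteq> 0"
  then have "invertible_elem (1 - v * cscale \<mu> u)"
    using assms by (simp add: alg_spectrum_subset_zero_iff cscale_right_commute)
  then show "invertible_elem (1 - cscale \<mu> (u * v))"
    using invertible_elem_one_minus_swap by (metis cscale_left_commute)
qed

lemma alg_spectrum_subset_zero_cscale:
  "c \<noteq> 0 \<Longrightarrow> alg_spectrum w \<subseteq> {0} \<Longrightarrow> alg_spectrum (cscale c w) \<subseteq> {0}"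
  by (simp add: alg_spectrum_subset_zero_iff cscale_cscale)

lemma alg_spectrum_subset_zero_nilpotent:
  "w ^ n = 0 \<Longrightarrow> alg_spectrum (w::'a::complex_banach_algebra_1) \<subseteq> {0}"
  unfolding alg_spectrum_subset_zero_iff
  by (metis cscale_power cscale_zero_right invertible_elem_one_minus_nilpotent)

lemma invertible_elem_one_minus_norm_less:
  assumes "norm (z::'a::complex_banach_algebra_1) < 1"
  shows "invertible_elem (1 - z)"
proof -
  have sum: "summable (\<lambda>n. z ^ n)"
    using assms by (rule complete_algebra_summable_geometric)
  define s where "s = (\<Sum>n. z ^ n)"
  have "z * s = s - 1"
    using suminf_split_head[OF sum] suminf_mult[OF sum, of z] by (simp add: s_def)
  moreover have "s * z = s - 1"
    using suminf_split_head[OF sum] suminf_mult2[OF sum, of z] by (simp add: s_def flip: power_Suc2)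
  ultimately have "(1 - z) * s = 1" "s * (1 - z) = 1"
    by (simp_all add: left_diff_distrib right_diff_distrib)
  then show ?thesis unfolding invertible_elem_def by blast
qed

lemma norm_le_if_in_alg_spectrum:
  assumes "\<mu> \<in> alg_spectrum (z::'a::complex_banach_algebra_1)"
  shows "cmod \<mu> \<le> norm z"
proof (rule ccontr)
  assume "\<not> cmod \<mu> \<le> norm z"
  then have "\<mu> \<noteq> 0" and "norm z / cmod \<mu> < 1"
    using norm_ge_zero[of z] by (auto simp: divide_less_eq)
  then have "\<mu> \<noteq> 0" "norm (cscale (inverse \<mu>) z) < 1"
    by (simp_all add: norm_cscale norm_inverse divide_inverse mult.commute)
  then have "invertible_elem (cscale \<mu> 1 - z)"
    by (simp add: cscale_one_minus invertible_elem_cscale_iff invertible_elem_one_minus_norm_less)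
  then show False using assms unfolding alg_spectrum_def by simp
qed

lemma quasinilpotent_imp_alg_spectrum_subset_zero:
  assumes "quasinilpotent (w::'a::complex_banach_algebra_1)"
  shows "alg_spectrum w \<subseteq> {0}"
proof
  fix \<mu> assume "\<mu> \<in> alg_spectrum w"
  moreover have "bdd_above (cmod ` alg_spectrum w)"
    using norm_le_if_in_alg_spectrum by (meson bdd_aboveI2)
  ultimately have "cmod \<mu> \<le> alg_spectral_radius w"
    unfolding alg_spectral_radius_def by (simp add: cSup_upper)
  then show "\<mu> \<in> {0}" using assms unfolding quasinilpotent_def by simp
qed

lemma quasinilpotent_if_alg_spectrum_subset_zero:
  assumes "alg_spectrum w \<subseteq> {0}" "\<not> invertible_elem (w::'a::complex_banach_algebra_1)"
  shows "quasinilpotent w"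
proof -
  have "invertible_elem (- w) \<Longrightarrow> invertible_elem w"
    unfolding invertible_elem_def by (metis minus_mult_commute mult_minus_right)
  then have "0 \<in> alg_spectrum w"
    using assms(2) by (auto simp: alg_spectrum_def)
  then have "alg_spectrum w = {0}"
    using assms(1) by blast
  then show ?thesis unfolding quasinilpotent_def alg_spectral_radius_def by simp
qed

lemma drazin_spectral_idempotent:
  fixes a d :: "'a::ring_1"
  assumes "a * d = d * a" "d * a * d = d"
  shows "(1 - a * d) * (1 - a * d) = 1 - a * d" and "a * (1 - a * d) = (1 - a * d) * a"
    and "(1 - a * d) * d = 0" and "d * (1 - a * d) = 0"
proof -
  have dad: "d * (a * d) = d" "a * (d * z) = d * (a * z)" for z
    using assms by (metis mult.assoc)+
  show "(1 - a * d) * d = 0" "d * (1 - a * d) = 0"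
    by (simp_all add: algebra_simps dad)
  then have "(1 - a * d) * (a * d) = 0"
    using assms(1) by (metis mult.assoc mult_zero_left)
  then show "(1 - a * d) * (1 - a * d) = 1 - a * d"
    by (simp add: right_diff_distrib)
  have "a * (a * d) = a * d * a"
    using assms(1) by (metis mult.assoc)
  then show "a * (1 - a * d) = (1 - a * d) * a"
    by (simp add: left_diff_distrib right_diff_distrib)
qed

lemma inverse_one_minus_mult_idempotent:
  fixes \<alpha> \<pi> t :: "'a::ring_1"
  assumes "\<pi> * \<pi> = \<pi>" "\<pi> * \<alpha> = \<alpha> * \<pi>" "(1 - \<alpha> * \<pi>) * t = 1" "t * (1 - \<alpha> * \<pi>) = 1"
  shows "\<pi> * t = t * \<pi>" and "\<alpha> * t = t * \<alpha>" and "\<pi> * t = \<pi> + \<alpha> * \<pi> * t"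
    and "\<pi> * t * (1 - \<alpha>) = \<pi>"
proof -
  have \<pi>\<alpha>\<pi>: "\<pi> * (\<alpha> * \<pi>) = \<alpha> * \<pi>"
    using assms(1,2) by (metis mult.assoc)
  have "\<pi> * (1 - \<alpha> * \<pi>) = (1 - \<alpha> * \<pi>) * \<pi>"
    using assms(1) by (simp add: right_diff_distrib left_diff_distrib \<pi>\<alpha>\<pi> mult.assoc)
  moreover have "\<alpha> * (1 - \<alpha> * \<pi>) = (1 - \<alpha> * \<pi>) * \<alpha>"
    using assms(2) by (simp add: right_diff_distrib left_diff_distrib mult.assoc)
  ultimately show \<pi>t: "\<pi> * t = t * \<pi>" and "\<alpha> * t = t * \<alpha>"
    using inverse_commutes[OF assms(3,4)] by blast+
  have "t = 1 + \<alpha> * \<pi> * t"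
    using assms(3) by (simp add: algebra_simps)
  then have "\<pi> * t = \<pi> + \<pi> * (\<alpha> * \<pi>) * t"
    by (metis distrib_left mult.assoc mult.right_neutral)
  then show "\<pi> * t = \<pi> + \<alpha> * \<pi> * t"
    by (simp add: \<pi>\<alpha>\<pi>)
  have "\<pi> * (1 - \<alpha>) = \<pi> * (1 - \<alpha> * \<pi>)"
    using assms(2) by (simp add: right_diff_distrib \<pi>\<alpha>\<pi>)
  then have "\<pi> * t * (1 - \<alpha>) = t * (1 - \<alpha> * \<pi>) * \<pi>"
    using \<open>\<pi> * (1 - \<alpha> * \<pi>) = (1 - \<alpha> * \<pi>) * \<pi>\<close> \<pi>t by (metis mult.assoc)
  then show "\<pi> * t * (1 - \<alpha>) = \<pi>"
    using assms(4) by simp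
qed

lemma jacobson_drazin_inverse:
  fixes a b d t :: "'a::ring_1"
  defines "\<alpha> \<equiv> 1 - a * b"
  defines "\<pi> \<equiv> 1 - \<alpha> * d"
  assumes d: "\<alpha> * d = d * \<alpha>" "d * \<alpha> * d = d"
    and t: "(1 - \<alpha> * \<pi>) * t = 1" "t * (1 - \<alpha> * \<pi>) = 1"
  defines "D \<equiv> 1 + b * d * a - b * \<pi> * t * a"
  shows "(1 - b * a) * D = D * (1 - b * a)" and "D * (1 - b * a) * D = D"
    and "(1 - b * a) * (1 - (1 - b * a) * D) = b * (\<alpha> * \<pi> * t * a)"
    and "\<alpha> * \<pi> * t * a * b = \<alpha> * \<pi>"
proof -
  note \<pi> = drazin_spectral_idempotent[OF d, folded \<pi>_def]
  note res = inverse_one_minus_mult_idempotent[OF \<pi>(1) \<pi>(2)[symmetric] t]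
  have ab: "a * b = 1 - \<alpha>"
    by (simp add: \<alpha>_def)
  have \<pi>tab: "\<pi> * t * (a * b) = \<pi>"
    using res(4) by (simp add: ab)
  define \<tau> where "\<tau> = b * \<pi> * t * a"
  have bab: "b * (a * (b * z)) = b * z - b * (\<alpha> * z)" and aba: "a * (b * a) = a - \<alpha> * a" for z
    by (simp_all add: \<alpha>_def algebra_simps)
  have \<alpha>d: "\<alpha> * d = 1 - \<pi>"
    by (simp add: \<pi>_def)
  have "(1 - b * a) * D = 1 - b * a + b * (\<alpha> * d) * a - b * (\<alpha> * \<pi> * t) * a"
    unfolding D_def by (simp add: algebra_simps bab)
  also have "\<dots> = 1 - b * (\<pi> + \<alpha> * \<pi> * t) * a"
    unfolding \<alpha>d by (simp add: algebra_simps)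
  finally have left: "(1 - b * a) * D = 1 - \<tau>"
    unfolding \<tau>_def res(3)[symmetric] by (simp add: mult.assoc)
  have \<pi>t\<alpha>: "\<pi> * (t * (\<alpha> * z)) = \<alpha> * (\<pi> * (t * z))" for z
    using \<pi>(2) res(2) by (metis mult.assoc)
  have "D * (1 - b * a) = 1 - b * a + b * (\<alpha> * d) * a - b * (\<alpha> * \<pi> * t) * a"
    unfolding D_def d(1) by (simp add: algebra_simps aba \<pi>t\<alpha>)
  also have "\<dots> = 1 - b * (\<pi> + \<alpha> * \<pi> * t) * a"
    unfolding \<alpha>d by (simp add: algebra_simps)
  finally have right: "D * (1 - b * a) = 1 - \<tau>"
    unfolding \<tau>_def res(3)[symmetric] by (simp add: mult.assoc)
  show "(1 - b * a) * D = D * (1 - b * a)"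
    unfolding left right ..
  have "\<tau> * \<tau> = b * (\<pi> * t * (a * b) * \<pi>) * t * a" "\<tau> * (b * d * a) = b * (\<pi> * t * (a * b) * d) * a"
    unfolding \<tau>_def by (simp_all add: mult.assoc)
  then have "\<tau> * \<tau> = \<tau>" "\<tau> * (b * d * a) = 0"
    unfolding \<pi>tab \<tau>_def by (simp_all add: \<pi>(1,3) mult.assoc)
  moreover have D\<tau>: "D = 1 + b * d * a - \<tau>"
    by (simp add: D_def \<tau>_def)
  ultimately have "(1 - \<tau>) * D = D"
    unfolding D\<tau> by (simp add: algebra_simps)
  then show "D * (1 - b * a) * D = D"
    unfolding right .
  show "(1 - b * a) * (1 - (1 - b * a) * D) = b * (\<alpha> * \<pi> * t * a)"
    unfolding left \<tau>_def by (simp add: algebra_simps bab)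
  show "\<alpha> * \<pi> * t * a * b = \<alpha> * \<pi>"
    using \<pi>tab by (simp add: mult.assoc)
qed

lemma invertible_if_drazin_residual_invertible:
  fixes a b :: "'a::ring_1"
  assumes "a * b = b * a" "b * a * b = b" and "invertible_elem (a * (1 - a * b))"
  shows "invertible_elem a"
proof -
  note \<pi> = drazin_spectral_idempotent[OF assms(1,2)]
  obtain t where "t * (a * (1 - a * b)) = 1"
    using assms(3) unfolding invertible_elem_def by blast
  then have "1 - a * b = 1"
    using \<pi>(1) by (metis mult.assoc mult_1_left)
  then show ?thesis
    using assms(3) by simp
qed

locale nil_class =
  fixes N :: "'a::complex_banach_algebra_1 \<Rightarrow> bool"
  assumes alg_spectrum_subset_zero: "N w \<Longrightarrow> alg_spectrum w \<subseteq> {0}"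
    and swap: "N (v * u) \<Longrightarrow> N (u * v)"
    and cscale: "c \<noteq> 0 \<Longrightarrow> N w \<Longrightarrow> N (cscale c w)"
begin

definition gen_drazin :: "'a \<Rightarrow> bool" where
  "gen_drazin a \<longleftrightarrow> (\<exists>b. a * b = b * a \<and> b * a * b = b \<and> N (a * (1 - a * b)))"

lemma invertible_one_minus: "N w \<Longrightarrow> \<mu> \<noteq> 0 \<Longrightarrow> invertible_elem (1 - cscale \<mu> w)"
  using alg_spectrum_subset_zero alg_spectrum_subset_zero_iff by blast

lemma gen_drazin_cscale:
  assumes "c \<noteq> 0" "gen_drazin a"
  shows "gen_drazin (cscale c a)"
proof -
  obtain b where b: "a * b = b * a" "b * a * b = b" "N (a * (1 - a * b))"
    using assms(2) unfolding gen_drazin_def by blast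
  let ?b = "cscale (inverse c) b"
  have "cscale c a * ?b = a * b" "?b * cscale c a = b * a"
    using assms(1) by (simp_all add: cscale_simps)
  moreover have "?b * cscale c a * ?b = ?b"
    using assms(1) b(2) by (simp add: cscale_simps)
  moreover have "N (cscale c a * (1 - a * b))"
    using assms(1) b(3) cscale by (simp add: cscale_left_commute)
  ultimately show ?thesis
    unfolding gen_drazin_def using b(1) by metis
qed

lemma gen_drazin_cscale_iff: "c \<noteq> 0 \<Longrightarrow> gen_drazin (cscale c a) \<longleftrightarrow> gen_drazin a"
  by (metis cscale_inverse_cancel(1) gen_drazin_cscale inverse_nonzero_iff_nonzero)

lemma gen_drazin_swap:
  assumes "gen_drazin (a * b)"
  shows "gen_drazin (b * a)"
proof -
  obtain d where d: "a * b * d = d * (a * b)" "d * (a * b) * d = d" "N (a * b * (1 - a * b * d))"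
    using assms unfolding gen_drazin_def by blast
  have comm: "a * (b * (d * z)) = d * (a * (b * z))" for z
    using d(1) by (metis mult.assoc)
  let ?d = "b * d * d * a"
  have "b * a * ?d = b * (d * (a * b) * d) * a" "?d * (b * a) = b * (d * (a * b) * d) * a"
    by (simp_all add: mult.assoc comm)
  then have ba_d: "b * a * ?d = b * d * a" and d_ba: "?d * (b * a) = b * d * a"
    by (simp_all add: d(2))
  moreover have "?d * (b * a) * ?d = b * d * (d * (a * b) * d) * a"
    unfolding d_ba by (simp add: mult.assoc comm)
  then have "?d * (b * a) * ?d = ?d"
    by (simp add: d(2))
  moreover have "b * a * (1 - b * a * ?d) = b * ((1 - a * b * d) * a)"
    unfolding ba_d by (simp add: algebra_simps)
  moreover have "N (b * ((1 - a * b * d) * a))"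
  proof (rule swap)
    have "a * (b * (d * (a * b))) = a * (b * (a * (b * d)))"
      using d(1) by (metis mult.assoc)
    then have "(1 - a * b * d) * a * b = a * b * (1 - a * b * d)"
      by (simp add: algebra_simps)
    then show "N ((1 - a * b * d) * a * b)"
      using d(3) by simp
  qed
  ultimately show ?thesis
    unfolding gen_drazin_def by metis
qed

lemma gen_drazin_one_minus_swap:
  assumes "gen_drazin (1 - a * b)"
  shows "gen_drazin (1 - b * a)"
proof -
  obtain d where d: "(1 - a * b) * d = d * (1 - a * b)" "d * (1 - a * b) * d = d"
    and N: "N ((1 - a * b) * (1 - (1 - a * b) * d))"
    using assms unfolding gen_drazin_def by blast
  define \<pi> where "\<pi> = 1 - (1 - a * b) * d"
  have "invertible_elem (1 - (1 - a * b) * \<pi>)"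
    using invertible_one_minus[OF N, of 1] by (simp add: \<pi>_def cscale_one)
  then obtain t where t: "(1 - (1 - a * b) * \<pi>) * t = 1" "t * (1 - (1 - a * b) * \<pi>) = 1"
    unfolding invertible_elem_def by blast
  note J = jacobson_drazin_inverse[OF d t[unfolded \<pi>_def], folded \<pi>_def]
  have "N ((1 - a * b) * \<pi> * t * a * b)"
    unfolding J(4) using N by (simp add: \<pi>_def)
  then have "N (b * ((1 - a * b) * \<pi> * t * a))"
    by (rule swap)
  then show ?thesis
    unfolding gen_drazin_def using J(1-3) by (intro exI[of _ "1 + b * d * a - b * \<pi> * t * a"]) simp
qed

lemma gen_drazin_add_orthogonal_idempotent:
  assumes e: "e * e = e" "e * v = 0" "v * e = 0" and "\<beta> \<noteq> 0" and "gen_drazin v"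
  shows "gen_drazin (cscale \<beta> e + v)"
proof -
  obtain d where d: "v * d = d * v" "d * v * d = d" "N (v * (1 - v * d))"
    using assms(5) unfolding gen_drazin_def by blast
  have de: "d * e = 0" and ed: "e * d = 0"
    using d(1,2) e(2,3) by (metis mult.assoc mult_zero_left mult_zero_right)+
  have e': "e * (e * x) = e * x" "e * (v * x) = 0" "v * (e * x) = 0" "d * (e * x) = 0" "e * (d * x) = 0"
    for x using e de ed by (metis mult.assoc mult_zero_left)+
  have d': "v * (d * x) = d * (v * x)" "d * (v * (d * x)) = d * x" "d * (v * d) = d" for x
    using d(1,2) by (metis mult.assoc)+
  let ?z = "cscale \<beta> e + v" and ?D = "cscale (inverse \<beta>) e + d"
  have zD: "?z * ?D = e + v * d" and Dz: "?D * ?z = e + v * d"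
    using assms(4) by (simp_all add: cscale_simps algebra_simps e de ed d(1))
  moreover have "?D * ?z * ?D = ?D"
    unfolding Dz using assms(4) by (simp add: cscale_simps algebra_simps e e' de ed d')
  moreover have "?z * (1 - ?z * ?D) = v * (1 - v * d)"
    unfolding zD using assms(4) by (simp add: cscale_simps algebra_simps e e' de ed d')
  ultimately show ?thesis
    unfolding gen_drazin_def using d(3) by metis
qed

lemma spectral_idempotent_annihilates_eigenidempotent:
  assumes d: "z * d = d * z" "d * z * d = d" "N (z * (1 - z * d))"
    and e: "z * e = cscale \<beta> e" "e * z = cscale \<beta> e" and "\<beta> \<noteq> 0"
  shows "(1 - z * d) * e = 0" and "e * (1 - z * d) = 0"
proof -
  txt \<open>\<open>1 - z\<pi>/\<beta>\<close> annihilates \<open>\<pi>e\<close> and \<open>e\<pi>\<close>, and is invertible because \<open>z\<pi> \<in> N\<close>.\<close>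
  define \<pi> where "\<pi> = 1 - z * d"
  note \<pi> = drazin_spectral_idempotent[OF d(1,2), folded \<pi>_def]
  let ?k = "1 - cscale (inverse \<beta>) (z * \<pi>)"
  have k: "invertible_elem ?k"
    using invertible_one_minus d(3) assms(6) unfolding \<pi>_def by simp
  have "z * (\<pi> * (\<pi> * e)) = \<pi> * (z * e)" "e * (\<pi> * (z * \<pi>)) = (e * z) * \<pi>"
    using \<pi>(1,2) by (metis mult.assoc)+
  then have "?k * (\<pi> * e) = 0" "(e * \<pi>) * ?k = 0"
    using assms(6) by (simp_all add: e right_diff_distrib left_diff_distrib cscale_simps mult.assoc)
  then show "(1 - z * d) * e = 0" "e * (1 - z * d) = 0"
    unfolding \<pi>_def[symmetric] using invertible_elem_mult_eq_0[OF k] by blast+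
qed

lemma gen_drazin_drop_orthogonal_idempotent:
  assumes e: "e * e = e" "e * v = 0" "v * e = 0" and \<beta>: "\<beta> \<noteq> 0"
    and "gen_drazin (cscale \<beta> e + v)"
  shows "gen_drazin v"
proof -
  define z where "z = cscale \<beta> e + v"
  obtain d where d: "z * d = d * z" "d * z * d = d" "N (z * (1 - z * d))"
    using assms(5) unfolding gen_drazin_def z_def by blast
  have ze: "z * e = cscale \<beta> e" and ez: "e * z = cscale \<beta> e"
    by (simp_all add: z_def cscale_simps algebra_simps e)
  note ann = spectral_idempotent_annihilates_eigenidempotent[OF d ze ez \<beta>]
  have zde: "z * (d * e) = e" and ezd: "e * (z * d) = e"
    using ann by (simp_all add: algebra_simps)
  have "d * e = cscale (inverse \<beta>) (d * (z * e))" "e * d = cscale (inverse \<beta>) (e * z * d)"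
    using \<beta> by (simp_all add: ze ez cscale_simps)
  then have de: "d * e = cscale (inverse \<beta>) e" and ed: "e * d = cscale (inverse \<beta>) e"
    using zde ezd d(1) by (metis mult.assoc)+
  have dz: "d * (z * d) = d" "z * (d * d) = d" "z * (e * x) = cscale \<beta> (e * x)" for x
    using d(1,2) ze by (metis mult.assoc cscale_left_commute)+
  define d' where "d' = d - cscale (inverse \<beta>) e"
  have v: "v = z - cscale \<beta> e"
    by (simp add: z_def)
  have vd: "v * d' = z * d - e" and dv: "d' * v = z * d - e"
    unfolding v d'_def using \<beta> by (simp_all add: cscale_simps algebra_simps ze ez ed de e d(1))
  moreover have "(z * d - e) * d' = d'"
    unfolding d'_def using \<beta> by (simp add: cscale_simps algebra_simps zde ed dz e)
  then have "d' * v * d' = d'"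
    unfolding dv .
  moreover have "(z - cscale \<beta> e) * (1 - (z * d - e)) = z * (1 - z * d)"
    using \<beta> by (simp add: cscale_simps algebra_simps ez ed ze dz ezd e)
  then have "v * (1 - v * d') = z * (1 - z * d)"
    unfolding vd by (simp add: v)
  ultimately show ?thesis
    unfolding gen_drazin_def using d(3) by metis
qed

lemma gen_drazin_add_orthogonal_idempotent_iff:
  "e * e = e \<Longrightarrow> e * v = 0 \<Longrightarrow> v * e = 0 \<Longrightarrow> \<beta> \<noteq> 0 \<Longrightarrow>
    gen_drazin (cscale \<beta> e + v) \<longleftrightarrow> gen_drazin v"
  using gen_drazin_add_orthogonal_idempotent gen_drazin_drop_orthogonal_idempotent by blast

lemma gen_drazin_exchange_idempotent:
  assumes p: "p * p = p" and q: "q * q = q" and "\<gamma> \<noteq> 0" "\<kappa> \<noteq> 0"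
    and W: "p * W = W" "W * q = 0"
  shows "gen_drazin (cscale \<gamma> q + W) \<longleftrightarrow> gen_drazin (cscale \<kappa> 1 - cscale \<kappa> p + W)"
proof -
  have Wq: "W * (q * x) = 0" and pW: "p * (W * x) = W * x" for x
    using W by (metis mult.assoc mult_zero_left)+
  have pp: "p * (p * x) = p * x" and qq: "q * (q * x) = q * x" for x
    using p q by (metis mult.assoc)+
  let ?a = "1 - cscale (inverse \<gamma>) W" and ?c = "1 - cscale (inverse \<kappa>) W"
  have scale_\<gamma>: "gen_drazin x \<longleftrightarrow> gen_drazin y" if "cscale \<gamma> x = y" for x y
    using that gen_drazin_cscale_iff[OF assms(3)] by blast
  have scale_\<kappa>: "gen_drazin x \<longleftrightarrow> gen_drazin y" if "cscale \<kappa> x = y" for x y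
    using that gen_drazin_cscale_iff[OF assms(4)] by blast
  have "gen_drazin (cscale \<gamma> q + W) \<longleftrightarrow> gen_drazin (1 - ?a * (1 - q))"
    using assms(3) by (intro scale_\<gamma>[symmetric]) (simp add: cscale_simps algebra_simps W)
  also have "\<dots> \<longleftrightarrow> gen_drazin (1 - (1 - q) * ?a)"
    using gen_drazin_one_minus_swap by blast
  also have "\<dots> \<longleftrightarrow> gen_drazin (cscale \<gamma> q + (1 - q) * W)"
    using assms(3) by (intro scale_\<gamma>) (simp add: cscale_simps algebra_simps)
  also have "\<dots> \<longleftrightarrow> gen_drazin ((1 - q) * W)"
    using q by (intro gen_drazin_add_orthogonal_idempotent_iff assms(3))
      (simp_all add: algebra_simps Wq W qq)
  also have "\<dots> \<longleftrightarrow> gen_drazin (W * p)"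
  proof -
    have "(1 - q) * W = ((1 - q) * p) * W" "W * ((1 - q) * p) = W * p"
      by (simp_all add: algebra_simps Wq pW W)
    then show ?thesis
      using gen_drazin_swap by metis
  qed
  also have "\<dots> \<longleftrightarrow> gen_drazin (cscale \<kappa> (1 - p) + W * p)"
    using p by (intro gen_drazin_add_orthogonal_idempotent_iff[symmetric] assms(4))
      (simp_all add: algebra_simps Wq pW pp W)
  also have "\<dots> \<longleftrightarrow> gen_drazin (1 - ?c * p)"
    using assms(4) by (intro scale_\<kappa>[symmetric]) (simp add: cscale_simps algebra_simps)
  also have "\<dots> \<longleftrightarrow> gen_drazin (1 - p * ?c)"
    using gen_drazin_one_minus_swap by blast
  also have "\<dots> \<longleftrightarrow> gen_drazin (cscale \<kappa> 1 - cscale \<kappa> p + W)"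
    using assms(4) by (intro scale_\<kappa>) (simp add: cscale_simps algebra_simps pW W)
  finally show ?thesis .
qed

end

interpretation nilpotent: nil_class "\<lambda>w::'a::complex_banach_algebra_1. \<exists>n. w ^ n = 0"
proof
  fix w :: 'a assume "\<exists>n. w ^ n = 0"
  then show "alg_spectrum w \<subseteq> {0}"
    using alg_spectrum_subset_zero_nilpotent by blast
next
  fix u v :: 'a assume "\<exists>n. (v * u) ^ n = 0"
  then obtain n where n: "(v * u) ^ n = 0" by blast
  have "(u * v) ^ Suc n = u * (v * u) ^ n * v"
    by (induction n) (simp_all add: mult.assoc)
  also have "\<dots> = 0"
    by (simp add: n)
  finally show "\<exists>n. (u * v) ^ n = 0" ..
next
  fix c :: complex and w :: 'a assume "\<exists>n. w ^ n = 0"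
  then obtain n where "w ^ n = 0" by blast
  then have "cscale c w ^ n = 0"
    by (simp add: cscale_power)
  then show "\<exists>n. cscale c w ^ n = 0" ..
qed

interpretation quasinil: nil_class "\<lambda>w::'a::complex_banach_algebra_1. alg_spectrum w \<subseteq> {0}"
  by unfold_locales (simp_all add: alg_spectrum_subset_zero_swap alg_spectrum_subset_zero_cscale)

lemma drazin_invertible_iff_gen_drazin: "drazin_invertible a \<longleftrightarrow> nilpotent.gen_drazin a"
  unfolding drazin_invertible_def nilpotent.gen_drazin_def ..

lemma g_drazin_invertible_iff_gen_drazin:
  "g_drazin_invertible a \<longleftrightarrow> quasinil.gen_drazin (a::'a::complex_banach_algebra_1)"
proof
  assume "g_drazin_invertible a"
  then show "quasinil.gen_drazin a"
    unfolding g_drazin_invertible_def quasinil.gen_drazin_def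
    using quasinilpotent_imp_alg_spectrum_subset_zero by blast
next
  assume "quasinil.gen_drazin a"
  then obtain b where b: "a * b = b * a" "b * a * b = b" "alg_spectrum (a * (1 - a * b)) \<subseteq> {0}"
    unfolding quasinil.gen_drazin_def by blast
  txt \<open>Spectrum in \<open>{0}\<close> yields spectral radius \<open>0\<close> only once \<open>0\<close> is known to lie in the
    spectrum (\<open>Sup {}\<close> is unspecified), so an invertible \<open>a\<close> is handled with its inverse.\<close>
  show "g_drazin_invertible a"
  proof (cases "invertible_elem a")
    case True
    then obtain c where c: "a * c = 1" "c * a = 1"
      unfolding invertible_elem_def by blast
    have "\<not> invertible_elem (0::'a)"
      unfolding invertible_elem_def by simp
    then have "quasinilpotent (0::'a)"
      using alg_spectrum_subset_zero_nilpotent[of 0 1] quasinilpotent_if_alg_spectrum_subset_zero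
      by simp
    then have "quasinilpotent (a * (1 - a * c))"
      using c by simp
    then show ?thesis
      unfolding g_drazin_invertible_def using c by (metis mult_1_left)
  next
    case False
    then have "quasinilpotent (a * (1 - a * b))"
      using b invertible_if_drazin_residual_invertible quasinilpotent_if_alg_spectrum_subset_zero
      by blast
    then show ?thesis
      unfolding g_drazin_invertible_def using b by blast
  qed
qed

lemma idempotent_pq_power_summand:
  fixes p q :: "'a::ring_1"
  assumes p: "p * p = p" and q: "q * q = q" and "1 \<le> k"
  shows "p * ((p * q) ^ (k - 1) * p - (p * q) ^ k) = (p * q) ^ (k - 1) * p - (p * q) ^ k"
    and "((p * q) ^ (k - 1) * p - (p * q) ^ k) * q = 0"
proof -
  obtain j where k: "k = Suc j"
    using assms(3) by (cases k) auto
  have "(p * q) ^ k = (p * q) ^ j * p * q"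
    unfolding k power_Suc2 by (simp only: mult.assoc)
  then have summand: "(p * q) ^ (k - 1) * p - (p * q) ^ k = (p * q) ^ j * p * (1 - q)"
    by (simp add: k right_diff_distrib)
  have "p * ((p * q) ^ j * p) = (p * q) ^ j * p"
    using p by (cases j) (simp_all add: mult.assoc[symmetric])
  then show "p * ((p * q) ^ (k - 1) * p - (p * q) ^ k) = (p * q) ^ (k - 1) * p - (p * q) ^ k"
    unfolding summand by (metis mult.assoc)
  show "((p * q) ^ (k - 1) * p - (p * q) ^ k) * q = 0"
    unfolding summand using q by (simp add: algebra_simps mult.assoc)
qed

theorem proposition3p1:
  fixes p q :: "'a::complex_banach_algebra_1"
    and m :: nat and gam1 :: complex and lam :: "nat \<Rightarrow> complex"
  assumes "p * p = p" and "q * q = q"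
    and "m \<ge> 1"
    and "lam 1 * gam1 \<noteq> 0"
  defines "S \<equiv> (\<Sum>k=2..m. cscale (lam k) ((p * q) ^ (k - 1) * p - (p * q) ^ k))"
  defines "x \<equiv> cscale (lam 1) p + cscale gam1 q - cscale (lam 1) (p * q) + S"
    and "y \<equiv> cscale (lam 1) 1 - cscale (lam 1) (p * q) + S"
  shows "(drazin_invertible x \<longleftrightarrow> drazin_invertible y) \<and>
         (g_drazin_invertible x \<longleftrightarrow> g_drazin_invertible y)"
proof -
  define W where "W = (\<Sum>k=1..m. cscale (lam k) ((p * q) ^ (k - 1) * p - (p * q) ^ k))"
  have "W = cscale (lam 1) (p - p * q) + S"
    unfolding W_def S_def using assms(3) by (simp add: sum.atLeast_Suc_atMost numeral_2_eq_2)
  then have x: "x = cscale gam1 q + W" and y: "y = cscale (lam 1) 1 - cscale (lam 1) p + W"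
    by (simp_all add: x_def y_def cscale_diff_right algebra_simps)
  have W: "p * W = W" "W * q = 0"
    unfolding W_def sum_distrib_left sum_distrib_right
    using idempotent_pq_power_summand[OF assms(1,2)]
    by (simp_all add: cscale_left_commute cscale_right_commute)
  have scalars: "gam1 \<noteq> 0" "lam 1 \<noteq> 0"
    using assms(4) by auto
  show ?thesis
    unfolding x y drazin_invertible_iff_gen_drazin g_drazin_invertible_iff_gen_drazin
    using nilpotent.gen_drazin_exchange_idempotent[OF assms(1,2) scalars W]
      quasinil.gen_drazin_exchange_idempotent[OF assms(1,2) scalars W]
    by blast
qed

end
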